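(* For the discounted MDP $M_\theta$ and any policy $\pi$, $\mathbb E_\theta[\mathrm{Regret}_\theta(T)]\ge\mathbb E_\theta\big[\sum_{t=1}^TV^*(s_t)-\frac1{1-\gamma}\sum_{t=1}^Tr(s_t,a_t)-\frac{\gamma}{(1-\gamma)^2}\big]$.
   Context: $M_\theta$: two states $x_0,x_1$, actions $\mathcal A=\{-1,1\}^{d-1}$, rewards $r(x_0,a)=0$, $r(x_1,a)=1$, transitions $p(x_1\mid x_0,a)=1/(1+(\delta^{-1}-1)e^{-a^\top\theta})$, $p(x_0\mid x_1,a)=\delta$ (remaining mass on staying), with $\delta=1-\gamma$, discount factor $\gamma\in(0,1)$, and $\theta\in\mathbb R^{d-1}$. A (history-dependent) policy $\pi$ is run from $s_1=x_0$; $\mathbb E_\theta$ is expectation over the resulting trajectory. $V^\pi_t(s)=\mathbb E[\sum_{i\ge0}\gamma^ir(s_{t+i},a_{t+i})\mid s_t=s]$ (given the history), $V^*$ is the optimal discounted value function, and $\mathrm{Regret}_\theta(T)=\sum_{t=1}^TV^*(s_t)-\sum_{t=1}^TV^\pi_t(s_t)$. *)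

theory Defs
  imports "HOL-Probability.Probability"
begin

text \<open>States: False = x0, True = x1.
  A history-dependent (possibly randomized) policy maps the list of completed
  (state, action) pairs together with the current state to a distribution over actions.\<close>

type_synonym act = "real list"
type_synonym hist = "(bool \<times> act) list"
type_synonym policy = "hist \<Rightarrow> bool \<Rightarrow> act pmf"

definition actions :: "nat \<Rightarrow> act set" where
  "actions d = {a. length a = d - 1 \<and> (\<forall>x\<in>set a. x = -1 \<or> x = 1)}"

definition inner_list :: "real list \<Rightarrow> real list \<Rightarrow> real" where
  "inner_list a b = sum_list (map2 (*) a b)"

definition rew :: "bool \<Rightarrow> act \<Rightarrow> real" where
  "rew s a = (if s then 1 else 0)"

text \<open>delta = 1 - gamma\<close>
definition trans :: "real list \<Rightarrow> real \<Rightarrow> bool \<Rightarrow> act \<Rightarrow> bool pmf" where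
  "trans \<theta> \<gamma> s a =
     (if s then bernoulli_pmf (1 - (1 - \<gamma>))
      else bernoulli_pmf (1 / (1 + (1 / (1 - \<gamma>) - 1) * exp (- inner_list a \<theta>))))"

definition valid_policy :: "nat \<Rightarrow> policy \<Rightarrow> bool" where
  "valid_policy d \<pi> \<longleftrightarrow> (\<forall>h s. set_pmf (\<pi> h s) \<subseteq> actions d)"

definition step :: "real list \<Rightarrow> real \<Rightarrow> policy \<Rightarrow> hist \<times> bool \<Rightarrow> (hist \<times> bool) pmf" where
  "step \<theta> \<gamma> \<pi> hs = (case hs of (h, s) \<Rightarrow>
      bind_pmf (\<pi> h s) (\<lambda>a. map_pmf (\<lambda>s'. (h @ [(s, a)], s')) (trans \<theta> \<gamma> s a)))"

primrec run :: "real list \<Rightarrow> real \<Rightarrow> policy \<Rightarrow> nat \<Rightarrow> hist \<times> bool \<Rightarrow> (hist \<times> bool) pmf" where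
  "run \<theta> \<gamma> \<pi> 0 hs = return_pmf hs"
| "run \<theta> \<gamma> \<pi> (Suc n) hs = bind_pmf (run \<theta> \<gamma> \<pi> n hs) (step \<theta> \<gamma> \<pi>)"

definition Vpi :: "real list \<Rightarrow> real \<Rightarrow> policy \<Rightarrow> hist \<Rightarrow> bool \<Rightarrow> real" where
  "Vpi \<theta> \<gamma> \<pi> h s =
     (\<Sum>i. \<gamma> ^ i * measure_pmf.expectation (run \<theta> \<gamma> \<pi> i (h, s))
              (\<lambda>(h', s'). measure_pmf.expectation (\<pi> h' s') (\<lambda>a. rew s' a)))"

definition Vstar :: "nat \<Rightarrow> real list \<Rightarrow> real \<Rightarrow> bool \<Rightarrow> real" where
  "Vstar d \<theta> \<gamma> s = (SUP \<pi>\<in>{\<pi>. valid_policy d \<pi>}. Vpi \<theta> \<gamma> \<pi> [] s)"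

text \<open>Regret_theta(T) along a trajectory whose first T steps are
  h = [(s_1,a_1),...,(s_T,a_T)]; V_t^pi(s_t) is evaluated given history take (t-1) h.\<close>
definition regret :: "nat \<Rightarrow> real list \<Rightarrow> real \<Rightarrow> policy \<Rightarrow> nat \<Rightarrow> hist \<Rightarrow> real" where
  "regret d \<theta> \<gamma> \<pi> T h =
     (\<Sum>t<T. Vstar d \<theta> \<gamma> (fst (h ! t))) - (\<Sum>t<T. Vpi \<theta> \<gamma> \<pi> (take t h) (fst (h ! t)))"

end

theory Submission
  imports Defs
begin

text \<open>The optimal values V* cancel, so everything reduces to bounding the expected sum of the
  policy values. Let q k be the expected reward at step k. By the tower property the expected
  value of the policy at time t is the discounted tail S t = \<Sum>i. \<gamma>^i q (t + i), which
  satisfies S t = q t + \<gamma> S (t + 1) and 0 \<le> S t \<le> 1/(1 - \<gamma>). Summing the recursion over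
  t < T gives (1 - \<gamma>) \<Sum>t<T. S t = \<Sum>t<T. q t - \<gamma> S 0 + \<gamma> S T \<le> \<Sum>t<T. q t + \<gamma>/(1 - \<gamma>).\<close>

lemma integrable_measure_pmf_bounded:
  fixes f :: "'a \<Rightarrow> real"
  assumes "\<And>x. \<bar>f x\<bar> \<le> B"
  shows "integrable (measure_pmf p) f"
  using assms by (intro measure_pmf.integrable_const_bound[where B = B]) auto

lemma expectation_bind_pmf_bounded:
  fixes f :: "'b \<Rightarrow> real"
  assumes "\<And>x. \<bar>f x\<bar> \<le> B"
  shows "measure_pmf.expectation (bind_pmf p q) f
       = measure_pmf.expectation p (\<lambda>x. measure_pmf.expectation (q x) f)"
  unfolding measure_pmf_bind
  using assms
  by (intro integral_bind[where K = "count_space UNIV" and B = B and B' = 1])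
     (auto simp: measure_pmf.emeasure_space_1 space_subprob_algebra subprob_space_measure_pmf)

lemma summable_geometric_times_bounded:
  fixes \<gamma> :: real
  assumes "\<bar>\<gamma>\<bar> < 1" and "\<And>i. \<bar>a i\<bar> \<le> B"
  shows "summable (\<lambda>i. \<gamma> ^ i * a i)"
proof (rule summable_comparison_test)
  show "\<exists>N. \<forall>n\<ge>N. norm (\<gamma> ^ n * a n) \<le> B * \<bar>\<gamma>\<bar> ^ n"
    using assms(2) by (auto simp: abs_mult power_abs mult.commute[of B] intro!: mult_left_mono)
  show "summable (\<lambda>n. B * \<bar>\<gamma>\<bar> ^ n)"
    using assms(1) by (intro summable_mult summable_geometric) simp
qed

lemma discounted_sum_bounds:
  fixes \<gamma> :: real
  assumes "0 \<le> \<gamma>" "\<gamma> < 1" and "\<And>i. 0 \<le> a i" "\<And>i. a i \<le> 1"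
  shows "0 \<le> (\<Sum>i. \<gamma> ^ i * a i)" and "(\<Sum>i. \<gamma> ^ i * a i) \<le> 1 / (1 - \<gamma>)"
proof -
  have summable: "summable (\<lambda>i. \<gamma> ^ i * a i)"
    using assms by (intro summable_geometric_times_bounded[where B = 1]) (auto simp: abs_le_iff)
  show "0 \<le> (\<Sum>i. \<gamma> ^ i * a i)"
    using assms by (intro suminf_nonneg[OF summable]) simp
  have "(\<Sum>i. \<gamma> ^ i * a i) \<le> (\<Sum>i. \<gamma> ^ i)"
    using assms by (intro suminf_le[OF _ summable]) (auto intro!: mult_left_le simp: summable_geometric)
  also have "\<dots> = 1 / (1 - \<gamma>)"
    using assms by (simp add: suminf_geometric)
  finally show "(\<Sum>i. \<gamma> ^ i * a i) \<le> 1 / (1 - \<gamma>)" .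
qed

definition discounted_tail :: "real \<Rightarrow> (nat \<Rightarrow> real) \<Rightarrow> nat \<Rightarrow> real" where
  "discounted_tail \<gamma> q t = (\<Sum>i. \<gamma> ^ i * q (t + i))"

lemma discounted_tail_Suc:
  fixes \<gamma> :: real
  assumes "\<bar>\<gamma>\<bar> < 1" and "\<And>i. \<bar>q i\<bar> \<le> B"
  shows "discounted_tail \<gamma> q t = q t + \<gamma> * discounted_tail \<gamma> q (Suc t)"
proof -
  have summable: "summable (\<lambda>i. \<gamma> ^ i * q (t + i))" "summable (\<lambda>i. \<gamma> ^ i * q (Suc t + i))"
    using assms by (auto intro!: summable_geometric_times_bounded)
  have "(\<Sum>i. \<gamma> ^ i * q (t + i)) - q t = (\<Sum>i. \<gamma> * (\<gamma> ^ i * q (Suc t + i)))"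
    using suminf_split_head[OF summable(1)] by (simp add: mult.assoc)
  also have "\<dots> = \<gamma> * (\<Sum>i. \<gamma> ^ i * q (Suc t + i))"
    using summable(2) by (rule suminf_mult)
  finally show ?thesis
    unfolding discounted_tail_def by simp
qed

lemma sum_discounted_tail_le:
  fixes \<gamma> :: real
  assumes "0 \<le> \<gamma>" "\<gamma> < 1" and "\<And>i. 0 \<le> q i" "\<And>i. q i \<le> 1"
  shows "(\<Sum>t<T. discounted_tail \<gamma> q t) \<le> 1 / (1 - \<gamma>) * (\<Sum>t<T. q t) + \<gamma> / (1 - \<gamma>)^2"
proof -
  define S where "S = discounted_tail \<gamma> q"
  define A where "A = (\<Sum>t<T. S t)"
  define Q where "Q = (\<Sum>t<T. q t)"
  have S_bounds: "0 \<le> S t" "S t \<le> 1 / (1 - \<gamma>)" for t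
    unfolding S_def discounted_tail_def using assms by (auto intro: discounted_sum_bounds)
  have "A = (\<Sum>t<T. q t + \<gamma> * S (Suc t))"
    unfolding A_def S_def using assms
    by (intro sum.cong refl discounted_tail_Suc[where B = 1]) (auto simp: abs_le_iff)
  also have "\<dots> = Q + \<gamma> * (A - S 0 + S T)"
  proof -
    have "(\<Sum>t<T. S (Suc t)) = A - S 0 + S T"
      unfolding A_def by (induction T) auto
    then show ?thesis
      unfolding Q_def by (simp add: sum.distrib sum_distrib_left[symmetric])
  qed
  finally have "(1 - \<gamma>) * A = Q - \<gamma> * S 0 + \<gamma> * S T"
    by (simp add: algebra_simps)
  also have "\<dots> \<le> Q + \<gamma> / (1 - \<gamma>)"
    using mult_nonneg_nonneg[OF assms(1) S_bounds(1)[of 0]] mult_left_mono[OF S_bounds(2)[of T] assms(1)]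
    by simp
  finally have "A \<le> (Q + \<gamma> / (1 - \<gamma>)) / (1 - \<gamma>)"
    using assms by (simp add: pos_le_divide_eq mult.commute)
  then show ?thesis
    unfolding A_def Q_def S_def by (simp add: add_divide_distrib power2_eq_square)
qed

lemma run_add: "run \<theta> \<gamma> \<pi> (m + n) x = bind_pmf (run \<theta> \<gamma> \<pi> m x) (run \<theta> \<gamma> \<pi> n)"
  by (induction n) (simp_all add: bind_return_pmf' bind_assoc_pmf)

lemma run_Suc_left: "run \<theta> \<gamma> \<pi> (Suc n) x = bind_pmf (step \<theta> \<gamma> \<pi> x) (run \<theta> \<gamma> \<pi> n)"
  using run_add[of \<theta> \<gamma> \<pi> 1 n x] by (simp add: bind_return_pmf)

lemma set_pmf_run:
  assumes "(h', s') \<in> set_pmf (run \<theta> \<gamma> \<pi> n (h, s))"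
  shows "\<exists>ys. h' = h @ ys \<and> length ys = n \<and> (0 < n \<longrightarrow> fst (hd ys) = s)"
  using assms
proof (induction n arbitrary: h s)
  case 0
  then show ?case by simp
next
  case (Suc n)
  obtain a s1 where "(h', s') \<in> set_pmf (run \<theta> \<gamma> \<pi> n (h @ [(s, a)], s1))"
    using Suc.prems unfolding run_Suc_left step_def by auto
  from Suc.IH[OF this] obtain ys where "h' = h @ [(s, a)] @ ys" "length ys = n"
    by auto
  then show ?case
    by (intro exI[of _ "(s, a) # ys"]) simp
qed

lemma map_pmf_run_prefix:
  assumes "t < T"
  shows "map_pmf (\<lambda>(h, s). (take t h, fst (h ! t))) (run \<theta> \<gamma> \<pi> T ([], s0))
       = run \<theta> \<gamma> \<pi> t ([], s0)"
proof -
  have "map_pmf (\<lambda>(h, s). (take t h, fst (h ! t))) (run \<theta> \<gamma> \<pi> T ([], s0))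
      = bind_pmf (run \<theta> \<gamma> \<pi> t ([], s0))
          (\<lambda>x. map_pmf (\<lambda>(h, s). (take t h, fst (h ! t))) (run \<theta> \<gamma> \<pi> (T - t) x))"
    using run_add[of \<theta> \<gamma> \<pi> t "T - t"] assms by (simp add: map_bind_pmf)
  also have "\<dots> = bind_pmf (run \<theta> \<gamma> \<pi> t ([], s0)) return_pmf"
  proof (intro bind_pmf_cong refl)
    fix x assume "x \<in> set_pmf (run \<theta> \<gamma> \<pi> t ([], s0))"
    then obtain h s where x: "x = (h, s)" and "length h = t"
      using set_pmf_run by (cases x) fastforce
    have "map_pmf (\<lambda>(h, s). (take t h, fst (h ! t))) (run \<theta> \<gamma> \<pi> (T - t) x)
        = map_pmf (\<lambda>_. x) (run \<theta> \<gamma> \<pi> (T - t) x)"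
    proof (intro map_pmf_cong refl)
      fix y assume "y \<in> set_pmf (run \<theta> \<gamma> \<pi> (T - t) x)"
      with set_pmf_run[of "fst y" "snd y" _ _ _ "T - t" h s] obtain ys
        where "fst y = h @ ys" "ys \<noteq> []" "fst (hd ys) = s"
        using assms x by fastforce
      then show "(\<lambda>(h, s). (take t h, fst (h ! t))) y = x"
        using \<open>length h = t\<close> x by (auto simp: nth_append hd_conv_nth split: prod.splits)
    qed
    then show "map_pmf (\<lambda>(h, s). (take t h, fst (h ! t))) (run \<theta> \<gamma> \<pi> (T - t) x) = return_pmf x"
      by simp
  qed
  finally show ?thesis
    by (simp add: bind_return_pmf')
qed

lemma expectation_sum_along_run:
  fixes f :: "hist \<Rightarrow> bool \<Rightarrow> real"
  assumes "\<And>h s. \<bar>f h s\<bar> \<le> B"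
  shows "integrable (measure_pmf (run \<theta> \<gamma> \<pi> T ([], s0)))
           (\<lambda>(h, s). \<Sum>t<T. f (take t h) (fst (h ! t)))"
    and "measure_pmf.expectation (run \<theta> \<gamma> \<pi> T ([], s0))
           (\<lambda>(h, s). \<Sum>t<T. f (take t h) (fst (h ! t)))
       = (\<Sum>t<T. measure_pmf.expectation (run \<theta> \<gamma> \<pi> t ([], s0)) (\<lambda>(h, s). f h s))"
proof -
  have integrable: "integrable (measure_pmf (run \<theta> \<gamma> \<pi> T ([], s0)))
                      (\<lambda>y. f (take t (fst y)) (fst (fst y ! t)))" for t
    using assms by (intro integrable_measure_pmf_bounded[where B = B])
  show "integrable (measure_pmf (run \<theta> \<gamma> \<pi> T ([], s0)))
          (\<lambda>(h, s). \<Sum>t<T. f (take t h) (fst (h ! t)))"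
    unfolding split_beta' by (rule Bochner_Integration.integrable_sum) (rule integrable)
  have "measure_pmf.expectation (run \<theta> \<gamma> \<pi> T ([], s0))
          (\<lambda>(h, s). \<Sum>t<T. f (take t h) (fst (h ! t)))
      = (\<Sum>t<T. measure_pmf.expectation (run \<theta> \<gamma> \<pi> T ([], s0))
                  (\<lambda>y. f (take t (fst y)) (fst (fst y ! t))))"
    unfolding split_beta' by (rule Bochner_Integration.integral_sum) (rule integrable)
  also have "\<dots> = (\<Sum>t<T. measure_pmf.expectation (run \<theta> \<gamma> \<pi> t ([], s0)) (\<lambda>(h, s). f h s))"
  proof (intro sum.cong refl)
    fix t assume "t \<in> {..<T}"
    then have "run \<theta> \<gamma> \<pi> t ([], s0)
             = map_pmf (\<lambda>(h, s). (take t h, fst (h ! t))) (run \<theta> \<gamma> \<pi> T ([], s0))"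
      by (simp add: map_pmf_run_prefix)
    then show "measure_pmf.expectation (run \<theta> \<gamma> \<pi> T ([], s0))
                 (\<lambda>y. f (take t (fst y)) (fst (fst y ! t)))
             = measure_pmf.expectation (run \<theta> \<gamma> \<pi> t ([], s0)) (\<lambda>(h, s). f h s)"
      by (simp only: integral_map_pmf split_beta prod.sel)
  qed
  finally show "measure_pmf.expectation (run \<theta> \<gamma> \<pi> T ([], s0))
           (\<lambda>(h, s). \<Sum>t<T. f (take t h) (fst (h ! t)))
       = (\<Sum>t<T. measure_pmf.expectation (run \<theta> \<gamma> \<pi> t ([], s0)) (\<lambda>(h, s). f h s))" .
qed

lemma rew_eq_of_bool: "rew s a = of_bool s"
  by (simp add: rew_def)

definition expected_reward :: "real list \<Rightarrow> real \<Rightarrow> policy \<Rightarrow> nat \<Rightarrow> hist \<times> bool \<Rightarrow> real" where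
  "expected_reward \<theta> \<gamma> \<pi> n x = measure_pmf.expectation (run \<theta> \<gamma> \<pi> n x) (\<lambda>(h, s). of_bool s)"

lemma expected_reward_bounds:
  "0 \<le> expected_reward \<theta> \<gamma> \<pi> n x" "expected_reward \<theta> \<gamma> \<pi> n x \<le> 1"
  unfolding expected_reward_def
  by (auto simp: split_beta intro!: Bochner_Integration.integral_nonneg measure_pmf.integral_le_const
                                    integrable_measure_pmf_bounded[where B = 1])

lemma expectation_expected_reward_run:
  "measure_pmf.expectation (run \<theta> \<gamma> \<pi> t x) (expected_reward \<theta> \<gamma> \<pi> i)
     = expected_reward \<theta> \<gamma> \<pi> (t + i) x"
  unfolding expected_reward_def run_add
  by (rule expectation_bind_pmf_bounded[symmetric, where B = 1]) (simp add: split_beta)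

lemma Vpi_eq_discounted_sum: "Vpi \<theta> \<gamma> \<pi> h s = (\<Sum>i. \<gamma> ^ i * expected_reward \<theta> \<gamma> \<pi> i (h, s))"
  unfolding Vpi_def expected_reward_def rew_eq_of_bool by (simp add: split_def)

lemma abs_Vpi_le:
  assumes "0 \<le> \<gamma>" "\<gamma> < 1"
  shows "\<bar>Vpi \<theta> \<gamma> \<pi> h s\<bar> \<le> 1 / (1 - \<gamma>)"
  unfolding Vpi_eq_discounted_sum
  using discounted_sum_bounds[OF assms expected_reward_bounds] by (simp add: abs_le_iff)

lemma expectation_Vpi_run:
  assumes "0 \<le> \<gamma>" "\<gamma> < 1"
  shows "measure_pmf.expectation (run \<theta> \<gamma> \<pi> t x) (\<lambda>(h, s). Vpi \<theta> \<gamma> \<pi> h s)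
       = discounted_tail \<gamma> (\<lambda>k. expected_reward \<theta> \<gamma> \<pi> k x) t"
proof -
  let ?M = "measure_pmf (run \<theta> \<gamma> \<pi> t x)"
  let ?f = "\<lambda>i y. \<gamma> ^ i * expected_reward \<theta> \<gamma> \<pi> i y"
  have norm_f: "norm (?f i y) = ?f i y" for i y
    using assms expected_reward_bounds[of \<theta> \<gamma> \<pi> i y] by simp
  have summable: "summable (\<lambda>i. \<gamma> ^ i * a i)" if "\<And>i. 0 \<le> a i \<and> a i \<le> 1" for a
    using assms that by (intro summable_geometric_times_bounded[where B = 1]) auto
  have "measure_pmf.expectation (run \<theta> \<gamma> \<pi> t x) (\<lambda>(h, s). Vpi \<theta> \<gamma> \<pi> h s)
      = (\<integral>y. (\<Sum>i. ?f i y) \<partial>?M)"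
    by (simp add: Vpi_eq_discounted_sum split_beta')
  also have "\<dots> = (\<Sum>i. \<integral>y. ?f i y \<partial>?M)"
  proof (rule integral_suminf)
    show "integrable ?M (?f i)" for i
      using assms expected_reward_bounds
      by (intro integrable_measure_pmf_bounded[where B = "\<gamma> ^ i"]) (simp add: mult_left_le)
    show "AE y in ?M. summable (\<lambda>i. norm (?f i y))"
      unfolding norm_f by (intro AE_I2 summable) (simp add: expected_reward_bounds)
    show "summable (\<lambda>i. \<integral>y. norm (?f i y) \<partial>?M)"
      unfolding norm_f
      by (simp add: expectation_expected_reward_run summable expected_reward_bounds)
  qed
  also have "\<dots> = discounted_tail \<gamma> (\<lambda>k. expected_reward \<theta> \<gamma> \<pi> k x) t"
    unfolding discounted_tail_def by (simp add: expectation_expected_reward_run)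
  finally show ?thesis .
qed

lemma expectation_sum_Vpi_le:
  assumes "0 \<le> \<gamma>" "\<gamma> < 1"
  shows "measure_pmf.expectation (run \<theta> \<gamma> \<pi> T ([], s0))
           (\<lambda>(h, s). \<Sum>t<T. Vpi \<theta> \<gamma> \<pi> (take t h) (fst (h ! t)))
       \<le> 1 / (1 - \<gamma>) * measure_pmf.expectation (run \<theta> \<gamma> \<pi> T ([], s0))
           (\<lambda>(h, s). \<Sum>t<T. rew (fst (h ! t)) (snd (h ! t)))
         + \<gamma> / (1 - \<gamma>)^2"
proof -
  define q where "q = (\<lambda>k. expected_reward \<theta> \<gamma> \<pi> k ([], s0))"
  have "measure_pmf.expectation (run \<theta> \<gamma> \<pi> T ([], s0))
          (\<lambda>(h, s). \<Sum>t<T. Vpi \<theta> \<gamma> \<pi> (take t h) (fst (h ! t)))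
      = (\<Sum>t<T. discounted_tail \<gamma> q t)"
    using expectation_sum_along_run(2)[where f = "Vpi \<theta> \<gamma> \<pi>", OF abs_Vpi_le[OF assms]]
    by (simp add: q_def expectation_Vpi_run[OF assms])
  moreover have "measure_pmf.expectation (run \<theta> \<gamma> \<pi> T ([], s0))
                   (\<lambda>(h, s). \<Sum>t<T. rew (fst (h ! t)) (snd (h ! t)))
               = (\<Sum>t<T. q t)"
    using expectation_sum_along_run(2)[where f = "\<lambda>h s. of_bool s" and B = 1]
    unfolding q_def expected_reward_def rew_eq_of_bool by simp
  moreover have "(\<Sum>t<T. discounted_tail \<gamma> q t) \<le> 1 / (1 - \<gamma>) * (\<Sum>t<T. q t) + \<gamma> / (1 - \<gamma>)^2"
    using assms expected_reward_bounds unfolding q_def by (intro sum_discounted_tail_le)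
  ultimately show ?thesis
    by simp
qed

theorem lemma39:
  fixes d :: nat and \<theta> :: "real list" and \<gamma> :: real and \<pi> :: policy and T :: nat
  assumes "d \<ge> 2" and "length \<theta> = d - 1"
    and "0 < \<gamma>" and "\<gamma> < 1"
    and "valid_policy d \<pi>"
  shows "measure_pmf.expectation (run \<theta> \<gamma> \<pi> T ([], False))
            (\<lambda>(h, s). regret d \<theta> \<gamma> \<pi> T h)
         \<ge> measure_pmf.expectation (run \<theta> \<gamma> \<pi> T ([], False))
            (\<lambda>(h, s). (\<Sum>t<T. Vstar d \<theta> \<gamma> (fst (h ! t)))
                       - 1 / (1 - \<gamma>) * (\<Sum>t<T. rew (fst (h ! t)) (snd (h ! t)))
                       - \<gamma> / (1 - \<gamma>)^2)"
proof -
  let ?M = "measure_pmf (run \<theta> \<gamma> \<pi> T ([], False))"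
  define V where "V = (\<lambda>(h :: hist, s :: bool). \<Sum>t<T. Vstar d \<theta> \<gamma> (fst (h ! t)))"
  define P where "P = (\<lambda>(h :: hist, s :: bool). \<Sum>t<T. Vpi \<theta> \<gamma> \<pi> (take t h) (fst (h ! t)))"
  define R where "R = (\<lambda>(h :: hist, s :: bool). \<Sum>t<T. rew (fst (h ! t)) (snd (h ! t)))"
  have \<gamma>: "0 \<le> \<gamma>" "\<gamma> < 1"
    using assms by simp_all
  have "\<bar>Vstar d \<theta> \<gamma> s\<bar> \<le> \<bar>Vstar d \<theta> \<gamma> True\<bar> + \<bar>Vstar d \<theta> \<gamma> False\<bar>" for s
    by (cases s) simp_all
  from expectation_sum_along_run(1)[where f = "\<lambda>h s. Vstar d \<theta> \<gamma> s", OF this]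
  have V: "integrable ?M V"
    unfolding V_def by simp
  have P: "integrable ?M P"
    unfolding P_def by (rule expectation_sum_along_run(1)[OF abs_Vpi_le[OF \<gamma>]])
  have R: "integrable ?M R"
    using expectation_sum_along_run(1)[where f = "\<lambda>h s. of_bool s" and B = 1]
    unfolding R_def rew_eq_of_bool by simp
  have "(\<lambda>(h, s). regret d \<theta> \<gamma> \<pi> T h) = (\<lambda>y. V y - P y)"
    by (auto simp: regret_def V_def P_def)
  moreover have "(\<lambda>(h, s). (\<Sum>t<T. Vstar d \<theta> \<gamma> (fst (h ! t)))
                       - 1 / (1 - \<gamma>) * (\<Sum>t<T. rew (fst (h ! t)) (snd (h ! t)))
                       - \<gamma> / (1 - \<gamma>)^2)
      = (\<lambda>y. V y - 1 / (1 - \<gamma>) * R y - \<gamma> / (1 - \<gamma>)^2)"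
    by (auto simp: V_def R_def)
  moreover have "integral\<^sup>L ?M P \<le> 1 / (1 - \<gamma>) * integral\<^sup>L ?M R + \<gamma> / (1 - \<gamma>)^2"
    unfolding P_def R_def by (rule expectation_sum_Vpi_le[OF \<gamma>])
  ultimately show ?thesis
    using V P R by simp
qed

end
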